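(* Let $C$ be a set of colors and $W\subseteq C^\omega$ any winning condition. For any positive integers $n,q$, any $n$-node arena $\mathcal{A}$ over $C$, and any $q$-state strategy $S_1$ of Player 0 in $\mathcal{A}$, there exists a chromatic $(q+1)^n$-state strategy $S_2$ of Player 0 in $\mathcal{A}$ such that for every node $v$ of $\mathcal{A}$: if $S_1$ is winning from $v$ w.r.t. $W$, then so is $S_2$.
   Context: An arena over a set of colors $C$ is a tuple $\mathcal{A} = \langle V, V_0, V_1, E\rangle$ of finite sets with $V = V_0 \sqcup V_1$, $E \subseteq V \times C \times V$, and every node having at least one outgoing edge; for $e=(s,c,t)$ write $\mathsf{source}(e)=s$, $\mathsf{col}(e)=c$, $\mathsf{target}(e)=t$. A path is a nonempty finite or infinite sequence of edges $e_1e_2\ldots$ with $\mathsf{target}(e_i)=\mathsf{source}(e_{i+1})$; for each node $v$ there is also a $0$-length path $\lambda_v$ with source and target $v$. $\mathsf{col}$ extends letterwise to sequences of edges. A strategy of Player 0 is a function $S$ assigning to each finite path $p$ with $\mathsf{target}(p)\in V_0$ an edge $S(p)$ with $\mathsf{source}(S(p))=\mathsf{target}(p)$. A path $p=e_1e_2\ldots$ is consistent with $S$ if (when $\mathsf{source}(p)\in V_0$) $e_1=S(\lambda_{\mathsf{source}(p)})$ and for each $1\le i<|p|$ with $\mathsf{target}(e_i)\in V_0$ we have $e_{i+1}=S(e_1\ldots e_i)$. For $v\in V$, $\mathsf{col}(S,v)\subseteq C^\omega$ is the set of $\mathsf{col}(p)$ over all infinite paths $p$ from $v$ consistent with $S$.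 $S$ is winning from $v$ w.r.t. $W$ if $\mathsf{col}(S,v)\subseteq W$. A memory structure is $\mathcal{M}=\langle M, m_{init},\delta\rangle$ with $M$ finite, $m_{init}\in M$, $\delta: M\times E\to M$ (extended to finite edge sequences in the usual way). $S$ is an $\mathcal{M}$-strategy if for all finite paths $p_1,p_2$ with $\mathsf{target}(p_1)=\mathsf{target}(p_2)\in V_0$, $\delta(m_{init},p_1)=\delta(m_{init},p_2)$ implies $S(p_1)=S(p_2)$. $\mathcal{M}$ is chromatic if there is $\sigma: M\times C\to M$ with $\delta(m,e)=\sigma(m,\mathsf{col}(e))$ for all $m,e$. A (chromatic) $q$-state strategy is an $\mathcal{M}$-strategy for some (chromatic) memory structure $\mathcal{M}$ with $|M|=q$. *)

theory Defs
  imports Main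
begin

type_synonym ('v, 'c) edge = "'v \<times> 'c \<times> 'v"

definition esrc :: "('v, 'c) edge \<Rightarrow> 'v" where "esrc e = fst e"
definition ecol :: "('v, 'c) edge \<Rightarrow> 'c" where "ecol e = fst (snd e)"
definition etgt :: "('v, 'c) edge \<Rightarrow> 'v" where "etgt e = snd (snd e)"

definition arena :: "'c set \<Rightarrow> 'v set \<Rightarrow> 'v set \<Rightarrow> ('v, 'c) edge set \<Rightarrow> bool" where
  "arena C V0 V1 E \<longleftrightarrow> finite V0 \<and> finite V1 \<and> finite E \<and> V0 \<inter> V1 = {} \<and>
     E \<subseteq> (V0 \<union> V1) \<times> C \<times> (V0 \<union> V1) \<and>
     (\<forall>v \<in> V0 \<union> V1. \<exists>e \<in> E. esrc e = v)"

text \<open>A finite path is represented by its source node together with its list of edges;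
  (v, []) is the 0-length path lambda_v.\<close>
type_synonym ('v, 'c) fpath = "'v \<times> ('v, 'c) edge list"

definition fin_path :: "'v set \<Rightarrow> ('v, 'c) edge set \<Rightarrow> ('v, 'c) fpath \<Rightarrow> bool" where
  "fin_path V E p \<longleftrightarrow> fst p \<in> V \<and> set (snd p) \<subseteq> E \<and>
     (snd p \<noteq> [] \<longrightarrow> esrc (hd (snd p)) = fst p) \<and>
     (\<forall>i. Suc i < length (snd p) \<longrightarrow> etgt (snd p ! i) = esrc (snd p ! Suc i))"

definition fp_target :: "('v, 'c) fpath \<Rightarrow> 'v" where
  "fp_target p = (if snd p = [] then fst p else etgt (last (snd p)))"

definition strategy0 :: "'v set \<Rightarrow> 'v set \<Rightarrow> ('v, 'c) edge set \<Rightarrow> (('v, 'c) fpath \<Rightarrow> ('v, 'c) edge) \<Rightarrow> bool" where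
  "strategy0 V0 V1 E S \<longleftrightarrow> (\<forall>p. fin_path (V0 \<union> V1) E p \<and> fp_target p \<in> V0 \<longrightarrow>
     S p \<in> E \<and> esrc (S p) = fp_target p)"

definition consistent_inf :: "'v set \<Rightarrow> ('v, 'c) edge set \<Rightarrow> (('v, 'c) fpath \<Rightarrow> ('v, 'c) edge) \<Rightarrow>
    'v \<Rightarrow> (nat \<Rightarrow> ('v, 'c) edge) \<Rightarrow> bool" where
  "consistent_inf V0 E S v p \<longleftrightarrow> (\<forall>i. p i \<in> E) \<and> esrc (p 0) = v \<and>
     (\<forall>i. etgt (p i) = esrc (p (Suc i))) \<and>
     (v \<in> V0 \<longrightarrow> p 0 = S (v, [])) \<and>
     (\<forall>i. etgt (p i) \<in> V0 \<longrightarrow> p (Suc i) = S (v, map p [0..<Suc i]))"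

definition col_outcomes :: "'v set \<Rightarrow> ('v, 'c) edge set \<Rightarrow> (('v, 'c) fpath \<Rightarrow> ('v, 'c) edge) \<Rightarrow>
    'v \<Rightarrow> (nat \<Rightarrow> 'c) set" where
  "col_outcomes V0 E S v = {ecol \<circ> p | p. consistent_inf V0 E S v p}"

definition winning_from :: "'v set \<Rightarrow> ('v, 'c) edge set \<Rightarrow> (('v, 'c) fpath \<Rightarrow> ('v, 'c) edge) \<Rightarrow>
    'v \<Rightarrow> (nat \<Rightarrow> 'c) set \<Rightarrow> bool" where
  "winning_from V0 E S v W \<longleftrightarrow> col_outcomes V0 E S v \<subseteq> W"

definition memory_structure :: "('v, 'c) edge set \<Rightarrow> 'm set \<Rightarrow> 'm \<Rightarrow> ('m \<Rightarrow> ('v, 'c) edge \<Rightarrow> 'm) \<Rightarrow> bool" where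
  "memory_structure E M m0 \<delta> \<longleftrightarrow> finite M \<and> m0 \<in> M \<and> (\<forall>m \<in> M. \<forall>e \<in> E. \<delta> m e \<in> M)"

definition mem_run :: "'m \<Rightarrow> ('m \<Rightarrow> ('v, 'c) edge \<Rightarrow> 'm) \<Rightarrow> ('v, 'c) fpath \<Rightarrow> 'm" where
  "mem_run m0 \<delta> p = foldl \<delta> m0 (snd p)"

definition is_M_strategy :: "'v set \<Rightarrow> 'v set \<Rightarrow> ('v, 'c) edge set \<Rightarrow> 'm \<Rightarrow> ('m \<Rightarrow> ('v, 'c) edge \<Rightarrow> 'm) \<Rightarrow>
    (('v, 'c) fpath \<Rightarrow> ('v, 'c) edge) \<Rightarrow> bool" where
  "is_M_strategy V0 V1 E m0 \<delta> S \<longleftrightarrow>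
     (\<forall>p1 p2. fin_path (V0 \<union> V1) E p1 \<and> fin_path (V0 \<union> V1) E p2 \<and>
        fp_target p1 = fp_target p2 \<and> fp_target p1 \<in> V0 \<and>
        mem_run m0 \<delta> p1 = mem_run m0 \<delta> p2 \<longrightarrow> S p1 = S p2)"

definition chromatic :: "('v, 'c) edge set \<Rightarrow> 'm set \<Rightarrow> ('m \<Rightarrow> ('v, 'c) edge \<Rightarrow> 'm) \<Rightarrow> bool" where
  "chromatic E M \<delta> \<longleftrightarrow> (\<exists>\<sigma> :: 'm \<Rightarrow> 'c \<Rightarrow> 'm. \<forall>m \<in> M. \<forall>e \<in> E. \<delta> m e = \<sigma> m (ecol e))"

end

theory Submission
  imports Defs "HOL-Library.FuncSet"
begin

(* The new memory records, for every node u, either nothing or one memory state of S1 that is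
   reached by some S1-consistent play which starts in a winning node, produces the colours read
   so far and ends in u.  This record is updated from the colours alone, so the memory is
   chromatic and has (q+1)^n states.  The new strategy moves as S1 would with the recorded
   memory state at the current node; hence along each of its plays the current node always
   carries a record, and Koenig's lemma applied to the backward pointers of the records turns
   them into a single infinite S1-consistent play from a winning node with the same colours. *)

primrec ancestor :: "(nat \<Rightarrow> 'a \<Rightarrow> 'a) \<Rightarrow> nat \<Rightarrow> nat \<Rightarrow> 'a \<Rightarrow> 'a" where
  "ancestor par k 0 u = u"
| "ancestor par k (Suc d) u = par k (ancestor par (Suc k) d u)"

lemma ancestor_in_level:
  assumes "\<And>k u. u \<in> L (Suc k) \<Longrightarrow> par k u \<in> L k"
  shows "u \<in> L (k + d) \<Longrightarrow> ancestor par k d u \<in> L k"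
  by (induction d arbitrary: k) (auto intro: assms)

lemma koenig_inverse_limit:
  fixes L :: "nat \<Rightarrow> 'a set" and par :: "nat \<Rightarrow> 'a \<Rightarrow> 'a"
  assumes finite: "\<And>k. finite (L k)" and nonempty: "\<And>k. L k \<noteq> {}"
    and par: "\<And>k u. u \<in> L (Suc k) \<Longrightarrow> par k u \<in> L k"
  shows "\<exists>x. \<forall>k. x k \<in> L k \<and> par k (x (Suc k)) = x k"
proof -
  define extendable where
    "extendable k x \<longleftrightarrow> infinite {d. \<exists>u \<in> L (k + d). ancestor par k d u = x}" for k x
  have "\<exists>x. x \<in> L 0 \<and> extendable 0 x"
  proof -
    have "\<forall>d \<in> UNIV. \<exists>x \<in> L 0. \<exists>u \<in> L (0 + d). ancestor par 0 d u = x"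
      using nonempty ancestor_in_level[where L=L and par=par, OF par, where k=0] by fastforce
    from pigeonhole_infinite_rel[OF infinite_UNIV_nat finite this] show ?thesis
      unfolding extendable_def by auto
  qed
  moreover have "\<exists>y. (y \<in> L (Suc k) \<and> extendable (Suc k) y) \<and> par k y = x"
    if "extendable k x" for k x
  proof -
    let ?D = "{d. \<exists>u \<in> L (k + Suc d). ancestor par k (Suc d) u = x}"
    let ?R = "\<lambda>d y. par k y = x \<and> (\<exists>u \<in> L (Suc k + d). ancestor par (Suc k) d u = y)"
    have "{d. \<exists>u \<in> L (k + d). ancestor par k d u = x} \<subseteq> insert 0 (Suc ` ?D)"
    proof
      fix d assume "d \<in> {d. \<exists>u \<in> L (k + d). ancestor par k d u = x}"
      then show "d \<in> insert 0 (Suc ` ?D)" by (cases d) auto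
    qed
    then have "infinite ?D"
      using that unfolding extendable_def by (meson finite_imageI finite_insert finite_subset)
    moreover have "\<forall>d \<in> ?D. \<exists>y \<in> L (Suc k). ?R d y"
    proof
      fix d assume "d \<in> ?D"
      then obtain u where "u \<in> L (Suc k + d)" "par k (ancestor par (Suc k) d u) = x" by auto
      then show "\<exists>y \<in> L (Suc k). ?R d y" using ancestor_in_level[where L=L and par=par, OF par] by blast
    qed
    ultimately obtain y where "y \<in> L (Suc k)" and y: "infinite {d \<in> ?D. ?R d y}"
      using pigeonhole_infinite_rel[OF _ finite, of ?D "Suc k" ?R] by blast
    moreover have "par k y = x"
      using infinite_imp_nonempty[OF y] by blast
    moreover from y have "extendable (Suc k) y"
      unfolding extendable_def by (rule infinite_super[rotated]) blast
    ultimately show ?thesis by blast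
  qed
  ultimately show ?thesis
    using dependent_nat_choice[of "\<lambda>k x. x \<in> L k \<and> extendable k x" "\<lambda>k x y. par k y = x"]
    by blast
qed

lemma consistent_inf_iff:
  "consistent_inf V0 E S v p \<longleftrightarrow> (\<forall>i. p i \<in> E) \<and> esrc (p 0) = v \<and>
     (\<forall>i. etgt (p i) = esrc (p (Suc i))) \<and>
     (\<forall>k. esrc (p k) \<in> V0 \<longrightarrow> p k = S (v, map p [0..<k]))"
proof -
  have split: "(\<forall>k. P k) \<longleftrightarrow> P 0 \<and> (\<forall>i. P (Suc i))" for P :: "nat \<Rightarrow> bool"
    by (metis nat.exhaust)
  show ?thesis
    unfolding consistent_inf_def
    using split[of "\<lambda>k. esrc (p k) \<in> V0 \<longrightarrow> p k = S (v, map p [0..<k])"] by auto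
qed

lemma fp_target_prefix:
  assumes "\<forall>i. etgt (p i) = esrc (p (Suc i))" and "esrc (p 0) = v"
  shows "fp_target (v, map p [0..<k]) = esrc (p k)"
  using assms by (cases k) (simp_all add: fp_target_def)

lemma fin_path_prefix:
  assumes "v \<in> V" and "\<forall>i. p i \<in> E" and "\<forall>i. etgt (p i) = esrc (p (Suc i))" and "esrc (p 0) = v"
  shows "fin_path V E (v, map p [0..<k])"
  using assms unfolding fin_path_def by (auto simp: hd_map)

lemma foldl_in_memory:
  "memory_structure E M m0 \<delta> \<Longrightarrow> m \<in> M \<Longrightarrow> set es \<subseteq> E \<Longrightarrow> foldl \<delta> m es \<in> M"
  by (induction es arbitrary: m) (auto simp: memory_structure_def)

lemma memory_transfer:
  assumes memory: "memory_structure E M m0 \<delta>" and "chromatic E M \<delta>"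
    and "is_M_strategy V0 V1 E m0 \<delta> S" and inj: "inj_on h M"
  defines "\<delta>' \<equiv> \<lambda>k e. h (\<delta> (the_inv_into M h k) e)"
  shows "memory_structure E (h ` M) (h m0) \<delta>' \<and> chromatic E (h ` M) \<delta>' \<and>
    is_M_strategy V0 V1 E (h m0) \<delta>' S"
proof (intro conjI)
  have step: "\<delta>' (h m) e = h (\<delta> m e)" if "m \<in> M" for m e
    unfolding \<delta>'_def using inj that by (simp add: the_inv_into_f_f)
  show "memory_structure E (h ` M) (h m0) \<delta>'"
    using memory step unfolding memory_structure_def by auto
  from \<open>chromatic E M \<delta>\<close> obtain \<sigma> where "\<forall>m \<in> M. \<forall>e \<in> E. \<delta> m e = \<sigma> m (ecol e)"
    unfolding chromatic_def by blast
  then have "\<forall>k \<in> h ` M. \<forall>e \<in> E. \<delta>' k e = h (\<sigma> (the_inv_into M h k) (ecol e))"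
    unfolding \<delta>'_def using inj by (auto simp: the_inv_into_f_f)
  then show "chromatic E (h ` M) \<delta>'"
    unfolding chromatic_def by (intro exI[of _ "\<lambda>k c. h (\<sigma> (the_inv_into M h k) c)"])
  have run: "foldl \<delta>' (h m) es = h (foldl \<delta> m es)" if "m \<in> M" "set es \<subseteq> E" for m es
    using that
  proof (induction es arbitrary: m)
    case (Cons e es)
    then show ?case
      using step memory unfolding memory_structure_def by auto
  qed simp
  show "is_M_strategy V0 V1 E (h m0) \<delta>' S"
    unfolding is_M_strategy_def
  proof (intro allI impI)
    fix p1 p2
    assume p: "fin_path (V0 \<union> V1) E p1 \<and> fin_path (V0 \<union> V1) E p2 \<and> fp_target p1 = fp_target p2 \<and>
      fp_target p1 \<in> V0 \<and> mem_run (h m0) \<delta>' p1 = mem_run (h m0) \<delta>' p2"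
    have "set (snd p1) \<subseteq> E" "set (snd p2) \<subseteq> E" "m0 \<in> M"
      using p memory unfolding fin_path_def memory_structure_def by auto
    then have "mem_run m0 \<delta> p1 = mem_run m0 \<delta> p2"
      using p run foldl_in_memory[OF memory] inj_onD[OF inj] unfolding mem_run_def by metis
    then show "S p1 = S p2"
      using p \<open>is_M_strategy V0 V1 E m0 \<delta> S\<close> unfolding is_M_strategy_def by blast
  qed
qed

locale finite_memory_strategy =
  fixes C :: "'c set" and V0 V1 :: "'v set" and E :: "('v, 'c) edge set"
    and S1 :: "('v, 'c) fpath \<Rightarrow> ('v, 'c) edge"
    and M1 :: "'m set" and m1 :: 'm and \<delta>1 :: "'m \<Rightarrow> ('v, 'c) edge \<Rightarrow> 'm"
  assumes arena: "arena C V0 V1 E"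
    and strategy: "strategy0 V0 V1 E S1"
    and memory: "memory_structure E M1 m1 \<delta>1"
    and M_strategy: "is_M_strategy V0 V1 E m1 \<delta>1 S1"
begin

abbreviation V :: "'v set" where "V \<equiv> V0 \<union> V1"

lemma finite_nodes: "finite V"
  using arena unfolding arena_def by simp

lemma edge_ends_in_nodes: "e \<in> E \<Longrightarrow> esrc e \<in> V \<and> etgt e \<in> V"
  using arena unfolding arena_def esrc_def etgt_def by auto

lemma S1_edge: "fin_path V E p \<Longrightarrow> fp_target p \<in> V0 \<Longrightarrow> S1 p \<in> E \<and> esrc (S1 p) = fp_target p"
  using strategy unfolding strategy0_def by blast

lemma S1_memory_determined:
  "\<lbrakk>fin_path V E p1; fin_path V E p2; fp_target p1 = fp_target p2; fp_target p1 \<in> V0;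
    mem_run m1 \<delta>1 p1 = mem_run m1 \<delta>1 p2\<rbrakk> \<Longrightarrow> S1 p1 = S1 p2"
  using M_strategy unfolding is_M_strategy_def by blast

(* The move of S1 at node u in memory state m; the fallback edge only matters for pairs (u, m)
   that no path reaches. *)
definition S1_move :: "'v \<Rightarrow> 'm \<Rightarrow> ('v, 'c) edge" where
  "S1_move u m =
    (if \<exists>p. fin_path V E p \<and> fp_target p = u \<and> mem_run m1 \<delta>1 p = m
     then S1 (SOME p. fin_path V E p \<and> fp_target p = u \<and> mem_run m1 \<delta>1 p = m)
     else (SOME e. e \<in> E \<and> esrc e = u))"

lemma S1_move_path:
  assumes "fin_path V E p" and "fp_target p \<in> V0"
  shows "S1_move (fp_target p) (mem_run m1 \<delta>1 p) = S1 p"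
proof -
  let ?P = "\<lambda>p'. fin_path V E p' \<and> fp_target p' = fp_target p \<and> mem_run m1 \<delta>1 p' = mem_run m1 \<delta>1 p"
  have ex: "\<exists>p'. ?P p'"
    using assms by blast
  then have "?P (SOME p'. ?P p')"
    by (rule someI_ex)
  then have "S1 (SOME p'. ?P p') = S1 p"
    using assms by (intro S1_memory_determined) auto
  with ex show ?thesis
    unfolding S1_move_def by (simp only: if_True)
qed

lemma S1_move_edge:
  assumes "u \<in> V0"
  shows "S1_move u m \<in> E \<and> esrc (S1_move u m) = u"
proof (cases "\<exists>p. fin_path V E p \<and> fp_target p = u \<and> mem_run m1 \<delta>1 p = m")
  case True
  let ?p = "SOME p. fin_path V E p \<and> fp_target p = u \<and> mem_run m1 \<delta>1 p = m"
  have "fin_path V E ?p" "fp_target ?p = u"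
    using someI_ex[OF True] by auto
  then show ?thesis
    using S1_edge assms True unfolding S1_move_def by auto
next
  case False
  have "\<exists>e. e \<in> E \<and> esrc e = u"
    using arena assms unfolding arena_def by blast
  then show ?thesis
    using False someI_ex[of "\<lambda>e. e \<in> E \<and> esrc e = u"] unfolding S1_move_def by auto
qed

(* A knowledge state f records at each node either None or the memory state of one witness
   play ending there; an edge is compatible with f and the colour c if it extends such a
   witness play by a move S1 can make. *)
definition compatible :: "('v \<Rightarrow> 'm option) \<Rightarrow> 'c \<Rightarrow> ('v, 'c) edge \<Rightarrow> bool" where
  "compatible f c e \<longleftrightarrow> e \<in> E \<and> ecol e = c \<and>
     (\<exists>m. f (esrc e) = Some m \<and> (esrc e \<in> V0 \<longrightarrow> e = S1_move (esrc e) m))"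

definition witness_edge :: "('v \<Rightarrow> 'm option) \<Rightarrow> 'c \<Rightarrow> 'v \<Rightarrow> ('v, 'c) edge" where
  "witness_edge f c u = (SOME e. compatible f c e \<and> etgt e = u)"

definition knowledge_step :: "('v \<Rightarrow> 'm option) \<Rightarrow> 'c \<Rightarrow> 'v \<Rightarrow> 'm option" where
  "knowledge_step f c = restrict (\<lambda>u.
     if \<exists>e. compatible f c e \<and> etgt e = u
     then Some (\<delta>1 (the (f (esrc (witness_edge f c u)))) (witness_edge f c u))
     else None) V"

abbreviation knowledge_update :: "('v \<Rightarrow> 'm option) \<Rightarrow> ('v, 'c) edge \<Rightarrow> 'v \<Rightarrow> 'm option" where
  "knowledge_update f e \<equiv> knowledge_step f (ecol e)"

definition knowledge_states :: "('v \<Rightarrow> 'm option) set" where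
  "knowledge_states = (\<Pi>\<^sub>E u \<in> V. insert None (Some ` M1))"

definition initial_knowledge :: "'v set \<Rightarrow> 'v \<Rightarrow> 'm option" where
  "initial_knowledge I = restrict (\<lambda>u. if u \<in> I then Some m1 else None) V"

definition knowledge_after :: "'v set \<Rightarrow> (nat \<Rightarrow> 'c) \<Rightarrow> nat \<Rightarrow> 'v \<Rightarrow> 'm option" where
  "knowledge_after I w k = foldl knowledge_step (initial_knowledge I) (map w [0..<k])"

definition simulating_strategy :: "'v set \<Rightarrow> ('v, 'c) fpath \<Rightarrow> ('v, 'c) edge" where
  "simulating_strategy I p = S1_move (fp_target p)
     (the (mem_run (initial_knowledge I) knowledge_update p (fp_target p)))"

lemma witness_edge_compatible:
  assumes "\<exists>e. compatible f c e \<and> etgt e = u"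
  shows "compatible f c (witness_edge f c u) \<and> etgt (witness_edge f c u) = u"
  unfolding witness_edge_def using assms by (rule someI_ex)

lemma compatible_in_nodes: "compatible f c e \<Longrightarrow> esrc e \<in> V \<and> etgt e \<in> V"
  using edge_ends_in_nodes unfolding compatible_def by blast

lemma knowledge_step_known:
  assumes "compatible f c e"
  shows "knowledge_step f c (etgt e) \<noteq> None"
proof -
  have "\<exists>e'. compatible f c e' \<and> etgt e' = etgt e"
    using assms by blast
  with compatible_in_nodes[OF assms] show ?thesis
    unfolding knowledge_step_def by (simp del: split_paired_Ex)
qed

lemma knowledge_step_knownD:
  assumes "u \<in> V" and "knowledge_step f c u \<noteq> None"
  shows "compatible f c (witness_edge f c u) \<and> etgt (witness_edge f c u) = u"
  using assms by (intro witness_edge_compatible) (auto simp: knowledge_step_def split: if_splits)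

lemma knowledge_step_witness:
  assumes "compatible f c e" and "witness_edge f c (etgt e) = e"
  shows "knowledge_step f c (etgt e) = Some (\<delta>1 (the (f (esrc e))) e)"
proof -
  have "\<exists>e'. compatible f c e' \<and> etgt e' = etgt e"
    using assms by blast
  with assms compatible_in_nodes[OF assms(1)] show ?thesis
    unfolding knowledge_step_def by (simp del: split_paired_Ex)
qed

lemma knowledge_step_in_states:
  assumes f: "f \<in> knowledge_states"
  shows "knowledge_step f c \<in> knowledge_states"
  unfolding knowledge_step_def knowledge_states_def restrict_PiE_iff
proof (intro ballI)
  fix u assume "u \<in> V"
  show "(if \<exists>e. compatible f c e \<and> etgt e = u
         then Some (\<delta>1 (the (f (esrc (witness_edge f c u)))) (witness_edge f c u))
         else None) \<in> insert None (Some ` M1)"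
  proof (cases "\<exists>e. compatible f c e \<and> etgt e = u")
    case True
    let ?e = "witness_edge f c u"
    obtain m where m: "f (esrc ?e) = Some m" and "?e \<in> E"
      using witness_edge_compatible[OF True] unfolding compatible_def by blast
    have "f (esrc ?e) \<in> insert None (Some ` M1)"
      using f \<open>?e \<in> E\<close> edge_ends_in_nodes unfolding knowledge_states_def by (blast intro: PiE_mem)
    with m have "m \<in> M1"
      by auto
    with m \<open>?e \<in> E\<close> True show ?thesis
      using memory unfolding memory_structure_def by auto
  next
    case False
    then show ?thesis
      by (simp only: if_False) simp
  qed
qed

lemma initial_knowledge_in_states: "initial_knowledge I \<in> knowledge_states"
  using memory unfolding initial_knowledge_def knowledge_states_def memory_structure_def by auto

lemma card_knowledge_states: "card knowledge_states = (card M1 + 1) ^ card V"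
proof -
  have "finite M1"
    using memory unfolding memory_structure_def by blast
  then have "card (insert None (Some ` M1)) = card M1 + 1"
    by (simp add: card_image)
  then show ?thesis
    unfolding knowledge_states_def using card_PiE[OF finite_nodes, of "\<lambda>_. insert None (Some ` M1)"]
    by simp
qed

lemma knowledge_memory_structure:
  "memory_structure E knowledge_states (initial_knowledge I) knowledge_update"
  unfolding memory_structure_def
  using finite_nodes memory initial_knowledge_in_states knowledge_step_in_states
  by (auto simp: knowledge_states_def memory_structure_def finite_PiE)

lemma knowledge_chromatic: "chromatic E knowledge_states knowledge_update"
  unfolding chromatic_def by blast

lemma simulating_strategy0: "strategy0 V0 V1 E (simulating_strategy I)"
  unfolding strategy0_def simulating_strategy_def using S1_move_edge by blast

lemma simulating_M_strategy:
  "is_M_strategy V0 V1 E (initial_knowledge I) knowledge_update (simulating_strategy I)"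
  unfolding is_M_strategy_def simulating_strategy_def by simp

lemma knowledge_after_0: "knowledge_after I w 0 = initial_knowledge I"
  by (simp add: knowledge_after_def)

lemma knowledge_after_Suc:
  "knowledge_after I w (Suc k) = knowledge_step (knowledge_after I w k) (w k)"
  by (simp add: knowledge_after_def)

lemma mem_run_knowledge:
  "mem_run (initial_knowledge I) knowledge_update (v, map p [0..<k]) = knowledge_after I (ecol \<circ> p) k"
  by (simp add: mem_run_def knowledge_after_def foldl_map)

lemma simulating_play_known:
  assumes play: "consistent_inf V0 E (simulating_strategy I) v p" and "v \<in> I"
  shows "knowledge_after I (ecol \<circ> p) k (esrc (p k)) \<noteq> None"
proof (induction k)
  case 0
  have "v \<in> V"
    using play edge_ends_in_nodes unfolding consistent_inf_def by blast
  with \<open>v \<in> I\<close> play show ?case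
    by (simp add: knowledge_after_0 initial_knowledge_def consistent_inf_def)
next
  case (Suc k)
  let ?F = "knowledge_after I (ecol \<circ> p) k"
  from Suc obtain m where m: "?F (esrc (p k)) = Some m"
    by blast
  have play': "\<forall>i. p i \<in> E" "esrc (p 0) = v" "\<forall>i. etgt (p i) = esrc (p (Suc i))"
    "\<forall>k. esrc (p k) \<in> V0 \<longrightarrow> p k = simulating_strategy I (v, map p [0..<k])"
    using play unfolding consistent_inf_iff by blast+
  have "p k = S1_move (esrc (p k)) m" if "esrc (p k) \<in> V0"
    using play'(4)[rule_format, OF that] m fp_target_prefix[OF play'(3,2)]
    by (simp add: simulating_strategy_def mem_run_knowledge)
  then have "compatible ?F (ecol (p k)) (p k)"
    using play'(1) m unfolding compatible_def by blast
  then have "knowledge_step ?F (ecol (p k)) (etgt (p k)) \<noteq> None"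
    by (rule knowledge_step_known)
  then show ?case
    using play'(3) unfolding knowledge_after_Suc by (metis comp_apply)
qed

lemma knowledge_backward_chain:
  assumes "\<forall>k. \<exists>u \<in> V. knowledge_after I w k u \<noteq> None"
  obtains e where "\<And>k. compatible (knowledge_after I w k) (w k) (e k)"
    and "\<And>k. witness_edge (knowledge_after I w k) (w k) (etgt (e k)) = e k"
    and "\<And>k. etgt (e k) = esrc (e (Suc k))"
proof -
  let ?F = "knowledge_after I w"
  define L where "L k = {u \<in> V. ?F k u \<noteq> None}" for k
  define par where "par k u = esrc (witness_edge (?F k) (w k) u)" for k u
  have "par k u \<in> L k" if "u \<in> L (Suc k)" for k u
  proof -
    have "compatible (?F k) (w k) (witness_edge (?F k) (w k) u)"
      using that knowledge_step_knownD unfolding L_def knowledge_after_Suc by blast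
    then show ?thesis
      unfolding par_def L_def compatible_def using edge_ends_in_nodes by auto
  qed
  moreover have "finite (L k)" for k
    unfolding L_def using finite_nodes by simp
  moreover have "L k \<noteq> {}" for k
    unfolding L_def using assms by blast
  ultimately obtain x where x: "\<And>k. x k \<in> L k" "\<And>k. par k (x (Suc k)) = x k"
    using koenig_inverse_limit[of L par] by blast
  define e where "e k = witness_edge (?F k) (w k) (x (Suc k))" for k
  have "compatible (?F k) (w k) (e k) \<and> etgt (e k) = x (Suc k)" for k
    using x(1)[of "Suc k"] knowledge_step_knownD unfolding L_def e_def knowledge_after_Suc by blast
  moreover have "esrc (e k) = x k" for k
    using x(2) unfolding e_def par_def by simp
  ultimately show ?thesis
    using that[of e] unfolding e_def by simp
qed

lemma backward_chain_is_S1_play: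
  assumes compatible: "\<And>k. compatible (knowledge_after I w k) (w k) (e k)"
    and witness: "\<And>k. witness_edge (knowledge_after I w k) (w k) (etgt (e k)) = e k"
    and chain: "\<forall>k. etgt (e k) = esrc (e (Suc k))"
  shows "esrc (e 0) \<in> I \<and> consistent_inf V0 E S1 (esrc (e 0)) e \<and> ecol \<circ> e = w"
proof -
  let ?F = "knowledge_after I w" and ?v = "esrc (e 0)"
  have edges: "\<forall>k. e k \<in> E" and colours: "ecol \<circ> e = w"
    using compatible unfolding compatible_def by auto
  have "?v \<in> V"
    using compatible_in_nodes[OF compatible] by blast
  have known: "?F k (esrc (e k)) = Some (mem_run m1 \<delta>1 (?v, map e [0..<k]))" for k
  proof (induction k)
    case 0
    then show ?case
      using compatible[of 0] \<open>?v \<in> V\<close>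
      by (auto simp: knowledge_after_0 initial_knowledge_def compatible_def mem_run_def split: if_splits)
  next
    case (Suc k)
    then show ?case
      using knowledge_step_witness[OF compatible witness] chain
      by (simp add: knowledge_after_Suc mem_run_def)
  qed
  have "?v \<in> I"
    using known[of 0] \<open>?v \<in> V\<close> by (auto simp: knowledge_after_0 initial_knowledge_def split: if_splits)
  moreover have "e k = S1 (?v, map e [0..<k])" if "esrc (e k) \<in> V0" for k
  proof -
    have "e k = S1_move (esrc (e k)) (mem_run m1 \<delta>1 (?v, map e [0..<k]))"
      using compatible[of k] known[of k] that unfolding compatible_def by auto
    then show ?thesis
      using S1_move_path[OF fin_path_prefix[OF \<open>?v \<in> V\<close> edges chain refl]]
        fp_target_prefix[OF chain refl] that
      by simp
  qed
  ultimately show ?thesis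
    using edges chain colours unfolding consistent_inf_iff by blast
qed

lemma simulating_outcomes:
  assumes "v \<in> I"
  shows "col_outcomes V0 E (simulating_strategy I) v \<subseteq> (\<Union>u \<in> I. col_outcomes V0 E S1 u)"
proof
  fix w assume "w \<in> col_outcomes V0 E (simulating_strategy I) v"
  then obtain p where w: "w = ecol \<circ> p" and play: "consistent_inf V0 E (simulating_strategy I) v p"
    unfolding col_outcomes_def by blast
  have "\<forall>k. \<exists>u \<in> V. knowledge_after I w k u \<noteq> None"
    using simulating_play_known[OF play assms] play edge_ends_in_nodes
    unfolding w consistent_inf_def by blast
  then obtain e where "\<And>k. compatible (knowledge_after I w k) (w k) (e k)"
    "\<And>k. witness_edge (knowledge_after I w k) (w k) (etgt (e k)) = e k"
    "\<And>k. etgt (e k) = esrc (e (Suc k))"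
    by (rule knowledge_backward_chain) blast
  then have "esrc (e 0) \<in> I \<and> consistent_inf V0 E S1 (esrc (e 0)) e \<and> ecol \<circ> e = w"
    by (intro backward_chain_is_S1_play) auto
  then show "w \<in> (\<Union>u \<in> I. col_outcomes V0 E S1 u)"
    unfolding col_outcomes_def by blast
qed

end

theorem corollary1:
  fixes C :: "'c set" and W :: "(nat \<Rightarrow> 'c) set"
    and V0 V1 :: "'v set" and E :: "('v, 'c) edge set"
    and n q :: nat
    and S1 :: "('v, 'c) fpath \<Rightarrow> ('v, 'c) edge"
    and M1 :: "'m set" and m1 :: 'm and \<delta>1 :: "'m \<Rightarrow> ('v, 'c) edge \<Rightarrow> 'm"
  assumes "W \<subseteq> {w. \<forall>i. w i \<in> C}"
    and "0 < n" and "0 < q"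
    and "arena C V0 V1 E" and "card (V0 \<union> V1) = n"
    and "strategy0 V0 V1 E S1"
    and "memory_structure E M1 m1 \<delta>1" and "card M1 = q"
    and "is_M_strategy V0 V1 E m1 \<delta>1 S1"
  shows "\<exists>S2 (M2 :: nat set) m2 \<delta>2.
           strategy0 V0 V1 E S2 \<and>
           memory_structure E M2 m2 \<delta>2 \<and> card M2 = (q + 1) ^ n \<and>
           chromatic E M2 \<delta>2 \<and> is_M_strategy V0 V1 E m2 \<delta>2 S2 \<and>
           (\<forall>v \<in> V0 \<union> V1. winning_from V0 E S1 v W \<longrightarrow> winning_from V0 E S2 v W)"
proof -
  interpret finite_memory_strategy C V0 V1 E S1 M1 m1 \<delta>1
    using assms by unfold_locales
  define Win where "Win = {u \<in> V. winning_from V0 E S1 u W}"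
  have winning: "winning_from V0 E (simulating_strategy Win) v W"
    if "v \<in> V" and "winning_from V0 E S1 v W" for v
    using simulating_outcomes[of v Win] that unfolding Win_def winning_from_def by blast
  have "finite knowledge_states"
    using knowledge_memory_structure unfolding memory_structure_def by blast
  then obtain h :: "('v \<Rightarrow> 'm option) \<Rightarrow> nat" where h: "inj_on h knowledge_states"
    using finite_imp_inj_to_nat_seg by blast
  then have "card (h ` knowledge_states) = (q + 1) ^ n"
    using card_knowledge_states assms(5,8) by (simp add: card_image)
  with memory_transfer[OF knowledge_memory_structure knowledge_chromatic simulating_M_strategy h]
  show ?thesis
    using simulating_strategy0 winning by blast
qed

end
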